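(* Let $M,N$ be $L$-structures with $M\equiv N$ (affine elementary equivalence), and assume both are $\aleph_0$-saturated in the affine sense. Then $M$ and $N$ are elementarily equivalent in full continuous logic, i.e. they assign the same value to every CL-sentence.
   Context: Affine continuous logic over a Lipschitz language $L$: structures are complete metric spaces of diameter $\le1$ with Lipschitz interpretations; affine formulas are built from atomic $1,d(t_1,t_2),R(\bar t)$ by $+$, real scalars, $\sup$, $\inf$; CL-formulas additionally allow the connectives $\wedge$ (min) and $\vee$ (max). $M\equiv N$ means $\sigma^M=\sigma^N$ for all affine sentences. For $A\subseteq M$, a type over $A$ is a positive linear functional $p$ with $p(1)=1$ on the space of affine formulas $\phi(\bar x)$ with parameters from $A$, identified when they take the same values on $M$; $\bar b$ realizes $p$ if $p(\phi)=\phi^M(\bar b)$ for all such $\phi$. $M$ is $\aleph_0$-saturated if for every finite $A\subseteq M$ every 1-type over $A$ is realized in $M$. *)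

theory Defs
  imports "HOL-Analysis.Analysis"
begin

text \<open>A Lipschitz language: function symbols of type 'f and relation symbols of
type 'r, each with an arity and a Lipschitz constant (w.r.t. the max metric on
finite powers).\<close>

record ('f, 'r) lang =
  farity :: "'f \<Rightarrow> nat"
  flip   :: "'f \<Rightarrow> real"
  rarity :: "'r \<Rightarrow> nat"
  rlip   :: "'r \<Rightarrow> real"

record ('a, 'f, 'r) struc =
  funs :: "'f \<Rightarrow> 'a list \<Rightarrow> 'a"
  rels :: "'r \<Rightarrow> 'a list \<Rightarrow> real"

definition maxdist :: "'a::metric_space list \<Rightarrow> 'a list \<Rightarrow> real" where
  "maxdist xs ys = foldr max (map (\<lambda>(x, y). dist x y) (zip xs ys)) 0"

definition is_structure :: "('f, 'r) lang \<Rightarrow> ('a::complete_space, 'f, 'r) struc \<Rightarrow> bool" where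
  "is_structure L M \<longleftrightarrow>
     (\<forall>x y :: 'a. dist x y \<le> 1) \<and>
     (\<forall>f xs ys. length xs = farity L f \<and> length ys = farity L f \<longrightarrow>
        dist (funs M f xs) (funs M f ys) \<le> flip L f * maxdist xs ys) \<and>
     (\<forall>R xs ys. length xs = rarity L R \<and> length ys = rarity L R \<longrightarrow>
        \<bar>rels M R xs - rels M R ys\<bar> \<le> rlip L R * maxdist xs ys)"

datatype 'f trm = Var nat | Fn 'f "'f trm list"

text \<open>CL-formulas: affine formulas plus min (\<and>) and max (\<or>).\<close>

datatype ('f, 'r) fml =
    One
  | Dist "'f trm" "'f trm"
  | Rel 'r "'f trm list"
  | Plus "('f, 'r) fml" "('f, 'r) fml"
  | Scal real "('f, 'r) fml"
  | Sup nat "('f, 'r) fml"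
  | Inf nat "('f, 'r) fml"
  | Min "('f, 'r) fml" "('f, 'r) fml"
  | Max "('f, 'r) fml" "('f, 'r) fml"

fun wf_trm :: "('f, 'r) lang \<Rightarrow> 'f trm \<Rightarrow> bool" where
  "wf_trm L (Var v) = True"
| "wf_trm L (Fn f ts) = (length ts = farity L f \<and> (\<forall>t\<in>set ts. wf_trm L t))"

fun wf_fml :: "('f, 'r) lang \<Rightarrow> ('f, 'r) fml \<Rightarrow> bool" where
  "wf_fml L One = True"
| "wf_fml L (Dist s t) = (wf_trm L s \<and> wf_trm L t)"
| "wf_fml L (Rel R ts) = (length ts = rarity L R \<and> (\<forall>t\<in>set ts. wf_trm L t))"
| "wf_fml L (Plus \<phi> \<psi>) = (wf_fml L \<phi> \<and> wf_fml L \<psi>)"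
| "wf_fml L (Scal c \<phi>) = wf_fml L \<phi>"
| "wf_fml L (Sup x \<phi>) = wf_fml L \<phi>"
| "wf_fml L (Inf x \<phi>) = wf_fml L \<phi>"
| "wf_fml L (Min \<phi> \<psi>) = (wf_fml L \<phi> \<and> wf_fml L \<psi>)"
| "wf_fml L (Max \<phi> \<psi>) = (wf_fml L \<phi> \<and> wf_fml L \<psi>)"

fun affine :: "('f, 'r) fml \<Rightarrow> bool" where
  "affine One = True"
| "affine (Dist s t) = True"
| "affine (Rel R ts) = True"
| "affine (Plus \<phi> \<psi>) = (affine \<phi> \<and> affine \<psi>)"
| "affine (Scal c \<phi>) = affine \<phi>"
| "affine (Sup x \<phi>) = affine \<phi>"
| "affine (Inf x \<phi>) = affine \<phi>"
| "affine (Min \<phi> \<psi>) = False"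
| "affine (Max \<phi> \<psi>) = False"

fun fv_trm :: "'f trm \<Rightarrow> nat set" where
  "fv_trm (Var v) = {v}"
| "fv_trm (Fn f ts) = (\<Union>t\<in>set ts. fv_trm t)"

fun fv :: "('f, 'r) fml \<Rightarrow> nat set" where
  "fv One = {}"
| "fv (Dist s t) = fv_trm s \<union> fv_trm t"
| "fv (Rel R ts) = (\<Union>t\<in>set ts. fv_trm t)"
| "fv (Plus \<phi> \<psi>) = fv \<phi> \<union> fv \<psi>"
| "fv (Scal c \<phi>) = fv \<phi>"
| "fv (Sup x \<phi>) = fv \<phi> - {x}"
| "fv (Inf x \<phi>) = fv \<phi> - {x}"
| "fv (Min \<phi> \<psi>) = fv \<phi> \<union> fv \<psi>"
| "fv (Max \<phi> \<psi>) = fv \<phi> \<union> fv \<psi>"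

definition sentence :: "('f, 'r) lang \<Rightarrow> ('f, 'r) fml \<Rightarrow> bool" where
  "sentence L \<phi> \<longleftrightarrow> wf_fml L \<phi> \<and> fv \<phi> = {}"

fun eval_trm :: "('a, 'f, 'r) struc \<Rightarrow> (nat \<Rightarrow> 'a) \<Rightarrow> 'f trm \<Rightarrow> 'a" where
  "eval_trm M e (Var v) = e v"
| "eval_trm M e (Fn f ts) = funs M f (map (eval_trm M e) ts)"

fun eval :: "('a::metric_space, 'f, 'r) struc \<Rightarrow> (nat \<Rightarrow> 'a) \<Rightarrow> ('f, 'r) fml \<Rightarrow> real" where
  "eval M e One = 1"
| "eval M e (Dist s t) = dist (eval_trm M e s) (eval_trm M e t)"
| "eval M e (Rel R ts) = rels M R (map (eval_trm M e) ts)"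
| "eval M e (Plus \<phi> \<psi>) = eval M e \<phi> + eval M e \<psi>"
| "eval M e (Scal c \<phi>) = c * eval M e \<phi>"
| "eval M e (Sup x \<phi>) = (SUP a. eval M (e(x := a)) \<phi>)"
| "eval M e (Inf x \<phi>) = (INF a. eval M (e(x := a)) \<phi>)"
| "eval M e (Min \<phi> \<psi>) = min (eval M e \<phi>) (eval M e \<psi>)"
| "eval M e (Max \<phi> \<psi>) = max (eval M e \<phi>) (eval M e \<psi>)"

text \<open>Value of a sentence (independent of the assignment).\<close>

definition sval :: "('a::metric_space, 'f, 'r) struc \<Rightarrow> ('f, 'r) fml \<Rightarrow> real" where
  "sval M \<sigma> = eval M (\<lambda>_. undefined) \<sigma>"

definition affine_equiv ::
  "('f, 'r) lang \<Rightarrow> ('a::metric_space, 'f, 'r) struc \<Rightarrow> ('b::metric_space, 'f, 'r) struc \<Rightarrow> bool" where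
  "affine_equiv L M N \<longleftrightarrow>
     (\<forall>\<sigma>. sentence L \<sigma> \<and> affine \<sigma> \<longrightarrow> sval M \<sigma> = sval N \<sigma>)"

definition CL_equiv ::
  "('f, 'r) lang \<Rightarrow> ('a::metric_space, 'f, 'r) struc \<Rightarrow> ('b::metric_space, 'f, 'r) struc \<Rightarrow> bool" where
  "CL_equiv L M N \<longleftrightarrow>
     (\<forall>\<sigma>. sentence L \<sigma> \<longrightarrow> sval M \<sigma> = sval N \<sigma>)"

text \<open>The affine formulas \<phi>(x) in the single variable x (= Var 0) with parameters from A,
represented by the functions they define on M (so formulas taking the same values on M
are identified). The remaining free variables are assigned parameters in A by e.\<close>

definition affine_defs1 :: "('f, 'r) lang \<Rightarrow> ('a::metric_space, 'f, 'r) struc \<Rightarrow> 'a set \<Rightarrow> ('a \<Rightarrow> real) set" where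
  "affine_defs1 L M A =
     {(\<lambda>b. eval M (e(0 := b)) \<phi>) | \<phi> e.
        wf_fml L \<phi> \<and> affine \<phi> \<and> (\<forall>v\<in>fv \<phi>. v \<noteq> 0 \<longrightarrow> e v \<in> A)}"

definition affine_type1 :: "('f, 'r) lang \<Rightarrow> ('a::metric_space, 'f, 'r) struc \<Rightarrow> 'a set \<Rightarrow> (('a \<Rightarrow> real) \<Rightarrow> real) \<Rightarrow> bool" where
  "affine_type1 L M A p \<longleftrightarrow>
     (\<forall>f\<in>affine_defs1 L M A. \<forall>g\<in>affine_defs1 L M A. p (\<lambda>b. f b + g b) = p f + p g) \<and>
     (\<forall>f\<in>affine_defs1 L M A. \<forall>c. p (\<lambda>b. c * f b) = c * p f) \<and>
     (\<forall>f\<in>affine_defs1 L M A. (\<forall>b. 0 \<le> f b) \<longrightarrow> 0 \<le> p f) \<and>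
     p (\<lambda>b. 1) = 1"

definition realizes1 :: "('f, 'r) lang \<Rightarrow> ('a::metric_space, 'f, 'r) struc \<Rightarrow> 'a set \<Rightarrow> (('a \<Rightarrow> real) \<Rightarrow> real) \<Rightarrow> 'a \<Rightarrow> bool" where
  "realizes1 L M A p b \<longleftrightarrow> (\<forall>f\<in>affine_defs1 L M A. p f = f b)"

definition aleph0_saturated :: "('f, 'r) lang \<Rightarrow> ('a::metric_space, 'f, 'r) struc \<Rightarrow> bool" where
  "aleph0_saturated L M \<longleftrightarrow>
     (\<forall>A p. finite A \<and> affine_type1 L M A p \<longrightarrow> (\<exists>b. realizes1 L M A p b))"

end

theory Submission
  imports Defs
begin

text \<open>Call assignments \<open>e\<close> in \<open>M\<close> and \<open>e'\<close> in \<open>N\<close> affinely agreeing on a finite set \<open>V\<close>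
  of variables if every affine formula with free variables in \<open>V\<close> takes the same value under
  \<open>e\<close> and \<open>e'\<close>. Given such a pair and an element \<open>c\<close> of \<open>M\<close>, sending the function that an
  affine formula \<open>\<psi>(x)\<close> defines on \<open>N\<close> (over the parameters \<open>e' ` V\<close>) to the value \<open>\<psi>(c)\<close> in
  \<open>M\<close> is well defined and positive: \<open>inf\<^sub>x \<psi>\<close> is again an affine formula over \<open>V\<close>, so it
  has the same value on both sides. This gives an affine 1-type over a finite set in \<open>N\<close>, and
  any realisation \<open>d\<close> extends the agreement to \<open>x\<close>. Going back and forth, \<open>sup\<^sub>x\<close> and
  \<open>inf\<^sub>x\<close> range over the same sets of values on both sides; since min and max act pointwise,
  induction shows that agreeing assignments give every CL-formula the same value. Affine
  equivalence is agreement on the empty set.\<close>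

primrec rename_trm :: "(nat \<Rightarrow> nat) \<Rightarrow> 'f trm \<Rightarrow> 'f trm" where
  "rename_trm s (Var v) = Var (s v)"
| "rename_trm s (Fn f ts) = Fn f (map (rename_trm s) ts)"

definition fresh :: "nat set \<Rightarrow> nat" where
  "fresh S = (SOME y. y \<notin> S)"

lemma fresh_notin: "finite S \<Longrightarrow> fresh S \<notin> S"
  unfolding fresh_def by (metis ex_new_if_finite infinite_UNIV_nat someI_ex)

primrec rename :: "(nat \<Rightarrow> nat) \<Rightarrow> ('f, 'r) fml \<Rightarrow> ('f, 'r) fml" where
  "rename s One = One"
| "rename s (Dist a b) = Dist (rename_trm s a) (rename_trm s b)"
| "rename s (Rel R ts) = Rel R (map (rename_trm s) ts)"
| "rename s (Plus \<phi> \<psi>) = Plus (rename s \<phi>) (rename s \<psi>)"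
| "rename s (Scal c \<phi>) = Scal c (rename s \<phi>)"
| "rename s (Sup x \<phi>) =
     (let y = fresh (s ` (fv \<phi> - {x})) in Sup y (rename (s(x := y)) \<phi>))"
| "rename s (Inf x \<phi>) =
     (let y = fresh (s ` (fv \<phi> - {x})) in Inf y (rename (s(x := y)) \<phi>))"
| "rename s (Min \<phi> \<psi>) = Min (rename s \<phi>) (rename s \<psi>)"
| "rename s (Max \<phi> \<psi>) = Max (rename s \<phi>) (rename s \<psi>)"

lemma finite_fv_trm: "finite (fv_trm t)"
  by (induction t) auto

lemma finite_fv: "finite (fv \<phi>)"
  by (induction \<phi>) (auto simp: finite_fv_trm)

lemma fv_trm_rename_trm: "fv_trm (rename_trm s t) = s ` fv_trm t"
  by (induction t) auto

lemma wf_trm_rename_trm: "wf_trm L (rename_trm s t) = wf_trm L t"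
  by (induction t) auto

lemma eval_trm_rename_trm: "eval_trm M e (rename_trm s t) = eval_trm M (e \<circ> s) t"
  by (induction t) (simp_all add: comp_def cong: map_cong)

lemma eval_trm_cong: "(\<And>v. v \<in> fv_trm t \<Longrightarrow> e v = e' v) \<Longrightarrow> eval_trm M e t = eval_trm M e' t"
proof (induction t)
  case (Fn f ts)
  then have "map (eval_trm M e) ts = map (eval_trm M e') ts"
    by auto
  then show ?case by (simp only: eval_trm.simps)
qed simp

lemma eval_cong: "(\<And>v. v \<in> fv \<phi> \<Longrightarrow> e v = e' v) \<Longrightarrow> eval M e \<phi> = eval M e' \<phi>"
proof (induction \<phi> arbitrary: e e')
  case (Dist s t)
  then show ?case by (simp add: eval_trm_cong[of s e e'] eval_trm_cong[of t e e'])
next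
  case (Rel R ts)
  then have "map (eval_trm M e) ts = map (eval_trm M e') ts"
    by (auto intro: eval_trm_cong)
  then show ?case by (simp only: eval.simps)
next
  case (Plus \<phi> \<psi>)
  then show ?case by (metis Un_iff eval.simps(4) fv.simps(4))
next
  case (Scal c \<phi>)
  then show ?case by (metis eval.simps(5) fv.simps(5))
next
  case (Sup x \<phi>)
  have "eval M (e(x := a)) \<phi> = eval M (e'(x := a)) \<phi>" for a
    by (rule Sup.IH) (use Sup.prems in auto)
  then show ?case by simp
next
  case (Inf x \<phi>)
  have "eval M (e(x := a)) \<phi> = eval M (e'(x := a)) \<phi>" for a
    by (rule Inf.IH) (use Inf.prems in auto)
  then show ?case by simp
next
  case (Min \<phi> \<psi>)
  then show ?case by (metis Un_iff eval.simps(8) fv.simps(8))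
next
  case (Max \<phi> \<psi>)
  then show ?case by (metis Un_iff eval.simps(9) fv.simps(9))
qed simp

lemma fv_rename: "fv (rename s \<phi>) \<subseteq> s ` fv \<phi>"
proof (induction \<phi> arbitrary: s)
  case (Sup x \<phi>)
  have "fv (rename (s(x := y)) \<phi>) - {y} \<subseteq> s ` (fv \<phi> - {x})" for y
  proof -
    have "(s(x := y)) ` fv \<phi> \<subseteq> insert y (s ` (fv \<phi> - {x}))" by auto
    with Sup.IH[of "s(x := y)"] show ?thesis by blast
  qed
  then show ?case by (simp add: Let_def)
next
  case (Inf x \<phi>)
  have "fv (rename (s(x := y)) \<phi>) - {y} \<subseteq> s ` (fv \<phi> - {x})" for y
  proof -
    have "(s(x := y)) ` fv \<phi> \<subseteq> insert y (s ` (fv \<phi> - {x}))" by auto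
    with Inf.IH[of "s(x := y)"] show ?thesis by blast
  qed
  then show ?case by (simp add: Let_def)
qed (fastforce simp: fv_trm_rename_trm)+

lemma wf_fml_rename: "wf_fml L (rename s \<phi>) = wf_fml L \<phi>"
  by (induction \<phi> arbitrary: s) (auto simp: wf_trm_rename_trm Let_def)

lemma affine_rename: "affine (rename s \<phi>) = affine \<phi>"
  by (induction \<phi> arbitrary: s) (auto simp: Let_def)

lemma eval_rename_binder:
  assumes "y \<notin> s ` (fv \<phi> - {x})"
    and "\<And>s e. eval M e (rename s \<phi>) = eval M (e \<circ> s) \<phi>"
  shows "eval M (e(y := a)) (rename (s(x := y)) \<phi>) = eval M ((e \<circ> s)(x := a)) \<phi>"
proof -
  have "eval M (e(y := a)) (rename (s(x := y)) \<phi>) = eval M (e(y := a) \<circ> s(x := y)) \<phi>"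
    by (rule assms(2))
  also have "\<dots> = eval M ((e \<circ> s)(x := a)) \<phi>"
    by (rule eval_cong) (use assms(1) in auto)
  finally show ?thesis .
qed

lemma eval_rename: "eval M e (rename s \<phi>) = eval M (e \<circ> s) \<phi>"
proof (induction \<phi> arbitrary: s e)
  case (Sup x \<phi>)
  define y where "y = fresh (s ` (fv \<phi> - {x}))"
  have "y \<notin> s ` (fv \<phi> - {x})"
    by (simp add: y_def fresh_notin finite_fv)
  then have "eval M (e(y := a)) (rename (s(x := y)) \<phi>) = eval M ((e \<circ> s)(x := a)) \<phi>" for a
    by (rule eval_rename_binder) (rule Sup.IH)
  then show ?case by (simp add: Let_def y_def[symmetric] comp_def)
next
  case (Inf x \<phi>)
  define y where "y = fresh (s ` (fv \<phi> - {x}))"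
  have "y \<notin> s ` (fv \<phi> - {x})"
    by (simp add: y_def fresh_notin finite_fv)
  then have "eval M (e(y := a)) (rename (s(x := y)) \<phi>) = eval M ((e \<circ> s)(x := a)) \<phi>" for a
    by (rule eval_rename_binder) (rule Inf.IH)
  then show ?case by (simp add: Let_def y_def[symmetric] comp_def)
qed (simp_all add: eval_trm_rename_trm comp_def)

lemma maxdist_nonneg: "0 \<le> maxdist xs ys"
  unfolding maxdist_def
proof (induction xs arbitrary: ys)
  case (Cons x xs)
  then show ?case by (cases ys) (auto simp: le_max_iff_disj)
qed simp

lemma maxdist_le_1:
  assumes "\<And>x y :: 'a::metric_space. dist x y \<le> 1"
  shows "maxdist (xs :: 'a list) ys \<le> 1"
  unfolding maxdist_def
proof (induction xs arbitrary: ys)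
  case (Cons x xs)
  then show ?case using assms by (cases ys) auto
qed simp

lemma rels_bounded:
  fixes M :: "('a::complete_space, 'f, 'r) struc"
  assumes "is_structure L M"
  shows "\<exists>B. \<forall>xs. length xs = rarity L R \<longrightarrow> \<bar>rels M R xs\<bar> \<le> B"
proof (intro exI allI impI)
  fix xs :: "'a list"
  assume len: "length xs = rarity L R"
  define ys where "ys = (replicate (rarity L R) undefined :: 'a list)"
  have "maxdist xs ys \<le> 1"
    using assms by (intro maxdist_le_1) (auto simp: is_structure_def)
  then have "\<bar>rlip L R\<bar> * maxdist xs ys \<le> \<bar>rlip L R\<bar>"
    using maxdist_nonneg by (simp add: mult_left_le)
  moreover have "\<bar>rels M R xs - rels M R ys\<bar> \<le> rlip L R * maxdist xs ys"
    using assms len by (auto simp: is_structure_def ys_def)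
  moreover have "rlip L R * maxdist xs ys \<le> \<bar>rlip L R\<bar> * maxdist xs ys"
    using maxdist_nonneg by (intro mult_right_mono) auto
  ultimately show "\<bar>rels M R xs\<bar> \<le> \<bar>rels M R ys\<bar> + \<bar>rlip L R\<bar>"
    by linarith
qed

lemma abs_cSUP_le:
  fixes f :: "'a \<Rightarrow> real"
  assumes "\<And>c. \<bar>f c\<bar> \<le> B"
  shows "\<bar>SUP c. f c\<bar> \<le> B"
proof -
  have "bdd_above (range f)"
    using assms by (intro bdd_aboveI[of _ B]) (auto simp: abs_le_iff)
  then have "f undefined \<le> (SUP c. f c)"
    by (rule cSUP_upper[rotated]) simp
  moreover have "(SUP c. f c) \<le> B"
    using assms by (intro cSUP_least) (auto simp: abs_le_iff)
  ultimately show ?thesis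
    using assms[of undefined] by (auto simp: abs_le_iff minus_le_iff)
qed

lemma abs_cINF_le:
  fixes f :: "'a \<Rightarrow> real"
  assumes "\<And>c. \<bar>f c\<bar> \<le> B"
  shows "\<bar>INF c. f c\<bar> \<le> B"
proof -
  have "bdd_below (range f)"
    using assms by (intro bdd_belowI[of _ "-B"]) (auto simp: abs_le_iff minus_le_iff)
  then have "(INF c. f c) \<le> f undefined"
    by (rule cINF_lower) simp
  moreover have "-B \<le> (INF c. f c)"
    using assms by (intro cINF_greatest) (auto simp: abs_le_iff minus_le_iff)
  ultimately show ?thesis
    using assms[of undefined] by (auto simp: abs_le_iff minus_le_iff)
qed

lemma eval_bounded:
  fixes M :: "('a::complete_space, 'f, 'r) struc"
  assumes M: "is_structure L M"
  shows "wf_fml L \<phi> \<Longrightarrow> \<exists>B. \<forall>e. \<bar>eval M e \<phi>\<bar> \<le> B"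
proof (induction \<phi>)
  case One
  then show ?case by auto
next
  case (Dist s t)
  have "dist x y \<le> 1" for x y :: 'a
    using M by (simp add: is_structure_def)
  then show ?case by auto
next
  case (Rel R ts)
  obtain B where "\<forall>xs. length xs = rarity L R \<longrightarrow> \<bar>rels M R xs\<bar> \<le> B"
    using rels_bounded[OF M] by blast
  with Rel have "\<bar>eval M e (Rel R ts)\<bar> \<le> B" for e
    by simp
  then show ?case by blast
next
  case (Plus \<phi> \<psi>)
  then obtain B B' where "\<forall>e. \<bar>eval M e \<phi>\<bar> \<le> B" "\<forall>e. \<bar>eval M e \<psi>\<bar> \<le> B'"
    by auto
  then have "\<bar>eval M e (Plus \<phi> \<psi>)\<bar> \<le> B + B'" for e
    by (simp add: abs_triangle_ineq order_trans[OF abs_triangle_ineq] add_mono)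
  then show ?case by blast
next
  case (Scal c \<phi>)
  then obtain B where "\<forall>e. \<bar>eval M e \<phi>\<bar> \<le> B"
    by auto
  then have "\<bar>eval M e (Scal c \<phi>)\<bar> \<le> \<bar>c\<bar> * B" for e
    by (simp add: abs_mult mult_left_mono)
  then show ?case by blast
next
  case (Sup x \<phi>)
  then obtain B where "\<forall>e. \<bar>eval M e \<phi>\<bar> \<le> B"
    by auto
  then show ?case by (auto intro: abs_cSUP_le)
next
  case (Inf x \<phi>)
  then obtain B where "\<forall>e. \<bar>eval M e \<phi>\<bar> \<le> B"
    by auto
  then show ?case by (auto intro: abs_cINF_le)
next
  case (Min \<phi> \<psi>)
  then obtain B B' where B: "\<And>e. \<bar>eval M e \<phi>\<bar> \<le> B" and B': "\<And>e. \<bar>eval M e \<psi>\<bar> \<le> B'"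
    by auto
  have "\<bar>eval M e (Min \<phi> \<psi>)\<bar> \<le> max B B'" for e
    using B[of e] B'[of e] by (auto simp: abs_le_iff min_def max_def)
  then show ?case by blast
next
  case (Max \<phi> \<psi>)
  then obtain B B' where B: "\<And>e. \<bar>eval M e \<phi>\<bar> \<le> B" and B': "\<And>e. \<bar>eval M e \<psi>\<bar> \<le> B'"
    by auto
  have "\<bar>eval M e (Max \<phi> \<psi>)\<bar> \<le> max B B'" for e
    using B[of e] B'[of e] by (auto simp: abs_le_iff min_def max_def)
  then show ?case by blast
qed

lemma bdd_below_range_eval:
  fixes M :: "('a::complete_space, 'f, 'r) struc"
  assumes "is_structure L M" "wf_fml L \<phi>"
  shows "bdd_below (range (\<lambda>c. eval M (h c) \<phi>))"
proof -
  obtain B where "\<forall>e. \<bar>eval M e \<phi>\<bar> \<le> B"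
    using eval_bounded[OF assms] by blast
  then show ?thesis
    by (intro bdd_belowI[of _ "-B"]) (auto simp: abs_le_iff minus_le_iff)
qed

definition affine_fmls :: "('f, 'r) lang \<Rightarrow> nat set \<Rightarrow> ('f, 'r) fml set" where
  "affine_fmls L V = {\<psi>. wf_fml L \<psi> \<and> affine \<psi> \<and> fv \<psi> \<subseteq> V}"

lemma affine_fmls_intros:
  "One \<in> affine_fmls L V"
  "\<phi> \<in> affine_fmls L V \<Longrightarrow> \<psi> \<in> affine_fmls L V \<Longrightarrow> Plus \<phi> \<psi> \<in> affine_fmls L V"
  "\<phi> \<in> affine_fmls L V \<Longrightarrow> Scal r \<phi> \<in> affine_fmls L V"
  "\<phi> \<in> affine_fmls L (insert x V) \<Longrightarrow> Inf x \<phi> \<in> affine_fmls L V"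
  by (auto simp: affine_fmls_def)

definition affine_agree ::
  "('f, 'r) lang \<Rightarrow> ('a::metric_space, 'f, 'r) struc \<Rightarrow> ('b::metric_space, 'f, 'r) struc \<Rightarrow>
   nat set \<Rightarrow> (nat \<Rightarrow> 'a) \<Rightarrow> (nat \<Rightarrow> 'b) \<Rightarrow> bool" where
  "affine_agree L M N V e e' \<longleftrightarrow> (\<forall>\<psi>\<in>affine_fmls L V. eval M e \<psi> = eval N e' \<psi>)"

lemma affine_agree_sym: "affine_agree L M N V e e' \<Longrightarrow> affine_agree L N M V e' e"
  unfolding affine_agree_def by auto

lemma affine_defs1_subset_image_affine_fmls:
  "affine_defs1 L M (e ` (V - {x})) \<subseteq> (\<lambda>\<psi> b. eval M (e(x := b)) \<psi>) ` affine_fmls L (insert x V)"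
proof
  fix f assume "f \<in> affine_defs1 L M (e ` (V - {x}))"
  then obtain \<phi> g where f: "f = (\<lambda>b. eval M (g(0 := b)) \<phi>)" and \<phi>: "wf_fml L \<phi>" "affine \<phi>"
    and g: "\<forall>v\<in>fv \<phi>. v \<noteq> 0 \<longrightarrow> g v \<in> e ` (V - {x})"
    unfolding affine_defs1_def by blast
  define \<sigma> where "\<sigma> v = (if v = 0 then x else (SOME w. w \<in> V - {x} \<and> e w = g v))" for v
  have \<sigma>0: "\<sigma> 0 = x"
    by (simp add: \<sigma>_def)
  have \<sigma>: "\<sigma> v \<in> V - {x} \<and> e (\<sigma> v) = g v" if v: "v \<in> fv \<phi>" "v \<noteq> 0" for v
  proof -
    obtain w where "w \<in> V - {x}" "g v = e w"
      using g v by blast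
    then have "\<exists>w. w \<in> V - {x} \<and> e w = g v"
      by auto
    from someI_ex[OF this] show ?thesis
      using v(2) by (simp add: \<sigma>_def)
  qed
  have "\<sigma> v \<in> insert x V" if "v \<in> fv \<phi>" for v
    using \<sigma>0 \<sigma>[OF that] by (cases "v = 0") auto
  then have "fv (rename \<sigma> \<phi>) \<subseteq> insert x V"
    using fv_rename[of \<sigma> \<phi>] by blast
  then have "rename \<sigma> \<phi> \<in> affine_fmls L (insert x V)"
    using \<phi> by (simp add: affine_fmls_def wf_fml_rename affine_rename)
  moreover have "eval M (e(x := b)) (rename \<sigma> \<phi>) = eval M (g(0 := b)) \<phi>" for b
    unfolding eval_rename
  proof (rule eval_cong)
    fix v assume "v \<in> fv \<phi>"
    then show "(e(x := b) \<circ> \<sigma>) v = (g(0 := b)) v"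
      using \<sigma>0 \<sigma> by (cases "v = 0") auto
  qed
  ultimately show "f \<in> (\<lambda>\<psi> b. eval M (e(x := b)) \<psi>) ` affine_fmls L (insert x V)"
    unfolding f by (intro image_eqI[of _ _ "rename \<sigma> \<phi>"]) auto
qed

lemma image_affine_fmls_subset_affine_defs1:
  "(\<lambda>\<psi> b. eval M (e(x := b)) \<psi>) ` affine_fmls L (insert x V) \<subseteq> affine_defs1 L M (e ` (V - {x}))"
proof
  fix f assume "f \<in> (\<lambda>\<psi> b. eval M (e(x := b)) \<psi>) ` affine_fmls L (insert x V)"
  then obtain \<psi> where f: "f = (\<lambda>b. eval M (e(x := b)) \<psi>)" and \<psi>: "\<psi> \<in> affine_fmls L (insert x V)"
    by blast
  define \<tau> where "\<tau> v = (if v = x then 0 else Suc v)" for v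
  define g where "g w = e (w - 1)" for w
  have "g(0 := b) \<circ> \<tau> = e(x := b)" for b
    by (auto simp: \<tau>_def g_def)
  then have "f = (\<lambda>b. eval M (g(0 := b)) (rename \<tau> \<psi>))"
    by (simp add: f eval_rename)
  moreover have "g w \<in> e ` (V - {x})" if w: "w \<in> fv (rename \<tau> \<psi>)" "w \<noteq> 0" for w
  proof -
    obtain v where v: "v \<in> fv \<psi>" "w = \<tau> v"
      using w(1) fv_rename by blast
    with w(2) have "v \<noteq> x" "w = Suc v"
      by (auto simp: \<tau>_def split: if_splits)
    with v(1) \<psi> show ?thesis
      by (auto simp: g_def affine_fmls_def)
  qed
  moreover have "wf_fml L (rename \<tau> \<psi>)" "affine (rename \<tau> \<psi>)"
    using \<psi> by (simp_all add: affine_fmls_def wf_fml_rename affine_rename)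
  ultimately show "f \<in> affine_defs1 L M (e ` (V - {x}))"
    unfolding affine_defs1_def by blast
qed

lemma affine_defs1_eq_image_affine_fmls:
  "affine_defs1 L M (e ` (V - {x})) =
     (\<lambda>\<psi> b. eval M (e(x := b)) \<psi>) ` affine_fmls L (insert x V)"
  by (rule equalityI[OF affine_defs1_subset_image_affine_fmls image_affine_fmls_subset_affine_defs1])

lemma affine_agree_nonneg_transfer:
  fixes M :: "('a::complete_space, 'f, 'r) struc"
  assumes M: "is_structure L M" and agree: "affine_agree L M N V e e'"
    and \<psi>: "\<psi> \<in> affine_fmls L (insert x V)" and nonneg: "\<And>d. 0 \<le> eval N (e'(x := d)) \<psi>"
  shows "0 \<le> eval M (e(x := c)) \<psi>"
proof -
  have agree_Inf: "eval M e (Inf x \<psi>) = eval N e' (Inf x \<psi>)"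
    using agree affine_fmls_intros(4)[OF \<psi>] unfolding affine_agree_def by blast
  have "0 \<le> eval N e' (Inf x \<psi>)"
    using nonneg by (simp add: cINF_greatest)
  also have "\<dots> = eval M e (Inf x \<psi>)"
    by (rule agree_Inf[symmetric])
  also have "\<dots> \<le> eval M (e(x := c)) \<psi>"
    using \<psi> by (auto simp: affine_fmls_def intro!: cINF_lower bdd_below_range_eval[OF M])
  finally show ?thesis .
qed

lemma affine_agree_mono_transfer:
  fixes M :: "('a::complete_space, 'f, 'r) struc"
  assumes M: "is_structure L M" and agree: "affine_agree L M N V e e'"
    and "\<phi> \<in> affine_fmls L (insert x V)" "\<psi> \<in> affine_fmls L (insert x V)"
    and le: "\<And>d. eval N (e'(x := d)) \<phi> \<le> eval N (e'(x := d)) \<psi>"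
  shows "eval M (e(x := c)) \<phi> \<le> eval M (e(x := c)) \<psi>"
proof -
  have "Plus \<psi> (Scal (-1) \<phi>) \<in> affine_fmls L (insert x V)"
    using assms(3,4) by (intro affine_fmls_intros)
  from affine_agree_nonneg_transfer[OF M agree this] le
  show ?thesis by simp
qed

text \<open>The affine type of \<open>c\<close> over \<open>e ` (V - {x})\<close> in \<open>M\<close>, read as a functional on the
  functions that affine formulas define in \<open>N\<close>; under affine agreement it does not depend on
  the formula chosen by \<open>SOME\<close>.\<close>

definition transfer_type ::
  "('f, 'r) lang \<Rightarrow> ('a::metric_space, 'f, 'r) struc \<Rightarrow> ('b::metric_space, 'f, 'r) struc \<Rightarrow>
   nat set \<Rightarrow> nat \<Rightarrow> (nat \<Rightarrow> 'a) \<Rightarrow> (nat \<Rightarrow> 'b) \<Rightarrow> 'a \<Rightarrow> ('b \<Rightarrow> real) \<Rightarrow> real" where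
  "transfer_type L M N V x e e' c f =
     eval M (e(x := c))
       (SOME \<psi>. \<psi> \<in> affine_fmls L (insert x V) \<and> f = (\<lambda>d. eval N (e'(x := d)) \<psi>))"

lemma transfer_type_eval:
  fixes M :: "('a::complete_space, 'f, 'r) struc"
  assumes M: "is_structure L M" and agree: "affine_agree L M N V e e'"
    and \<psi>: "\<psi> \<in> affine_fmls L (insert x V)"
  shows "transfer_type L M N V x e e' c (\<lambda>d. eval N (e'(x := d)) \<psi>) = eval M (e(x := c)) \<psi>"
proof -
  define \<psi>' where "\<psi>' = (SOME \<psi>'. \<psi>' \<in> affine_fmls L (insert x V) \<and>
    (\<lambda>d. eval N (e'(x := d)) \<psi>) = (\<lambda>d. eval N (e'(x := d)) \<psi>'))"
  have "\<psi>' \<in> affine_fmls L (insert x V)" "\<And>d. eval N (e'(x := d)) \<psi> = eval N (e'(x := d)) \<psi>'"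
    unfolding \<psi>'_def by (metis (mono_tags, lifting) \<psi> someI)+
  then have "eval M (e(x := c)) \<psi>' \<le> eval M (e(x := c)) \<psi>"
    "eval M (e(x := c)) \<psi> \<le> eval M (e(x := c)) \<psi>'"
    using \<psi> by (auto intro!: affine_agree_mono_transfer[OF M agree])
  then show ?thesis
    by (simp add: transfer_type_def \<psi>'_def)
qed

lemma affine_type1_transfer_type:
  fixes M :: "('a::complete_space, 'f, 'r) struc"
  assumes M: "is_structure L M" and agree: "affine_agree L M N V e e'"
  shows "affine_type1 L N (e' ` (V - {x})) (transfer_type L M N V x e e' c)"
proof -
  let ?\<Phi> = "affine_fmls L (insert x V)"
  let ?p = "transfer_type L M N V x e e' c"
  define rf where "rf \<psi> = (\<lambda>d. eval N (e'(x := d)) \<psi>)" for \<psi>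
  have p: "?p (rf \<psi>) = eval M (e(x := c)) \<psi>" if "\<psi> \<in> ?\<Phi>" for \<psi>
    unfolding rf_def using transfer_type_eval[OF M agree that] .
  have defs: "affine_defs1 L N (e' ` (V - {x})) = rf ` ?\<Phi>"
    unfolding rf_def by (rule affine_defs1_eq_image_affine_fmls)
  show ?thesis
    unfolding affine_type1_def defs
  proof (intro conjI ballI allI impI)
    fix f g assume "f \<in> rf ` ?\<Phi>" "g \<in> rf ` ?\<Phi>"
    then obtain \<phi> \<psi> where "\<phi> \<in> ?\<Phi>" "\<psi> \<in> ?\<Phi>" "f = rf \<phi>" "g = rf \<psi>"
      by blast
    moreover have "(\<lambda>d. rf \<phi> d + rf \<psi> d) = rf (Plus \<phi> \<psi>)"
      by (simp add: rf_def)
    ultimately show "?p (\<lambda>d. f d + g d) = ?p f + ?p g"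
      by (simp add: p affine_fmls_intros)
  next
    fix f r assume "f \<in> rf ` ?\<Phi>"
    then obtain \<phi> where "\<phi> \<in> ?\<Phi>" "f = rf \<phi>"
      by blast
    moreover have "(\<lambda>d. r * rf \<phi> d) = rf (Scal r \<phi>)"
      by (simp add: rf_def)
    ultimately show "?p (\<lambda>d. r * f d) = r * ?p f"
      by (simp add: p affine_fmls_intros)
  next
    fix f assume "f \<in> rf ` ?\<Phi>" and nonneg: "\<forall>d. 0 \<le> f d"
    then obtain \<phi> where \<phi>: "\<phi> \<in> ?\<Phi>" "f = rf \<phi>"
      by blast
    have "0 \<le> eval M (e(x := c)) \<phi>"
      using \<phi> nonneg by (intro affine_agree_nonneg_transfer[OF M agree]) (simp_all add: rf_def)
    with \<phi> show "0 \<le> ?p f"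
      by (simp add: p)
  next
    have "(\<lambda>d. 1) = rf One"
      by (simp add: rf_def)
    then show "?p (\<lambda>d. 1) = 1"
      by (simp add: p affine_fmls_intros)
  qed
qed

lemma affine_agree_extend:
  fixes M :: "('a::complete_space, 'f, 'r) struc"
  assumes M: "is_structure L M" and N: "aleph0_saturated L N"
    and "finite V" and agree: "affine_agree L M N V e e'"
  obtains d where "affine_agree L M N (insert x V) (e(x := c)) (e'(x := d))"
proof -
  let ?p = "transfer_type L M N V x e e' c"
  obtain d where d: "realizes1 L N (e' ` (V - {x})) ?p d"
    using N affine_type1_transfer_type[OF M agree] \<open>finite V\<close>
    unfolding aleph0_saturated_def by blast
  have "eval M (e(x := c)) \<psi> = eval N (e'(x := d)) \<psi>" if \<psi>: "\<psi> \<in> affine_fmls L (insert x V)" for \<psi>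
  proof -
    have "?p (\<lambda>d. eval N (e'(x := d)) \<psi>) = eval N (e'(x := d)) \<psi>"
      using d \<psi> unfolding realizes1_def affine_defs1_eq_image_affine_fmls by blast
    with transfer_type_eval[OF M agree \<psi>] show ?thesis
      by simp
  qed
  then show ?thesis
    using that unfolding affine_agree_def by blast
qed

lemma affine_agree_range_eq:
  fixes M :: "('a::complete_space, 'f, 'r) struc" and N :: "('b::complete_space, 'f, 'r) struc"
  assumes "is_structure L M" "is_structure L N" "aleph0_saturated L M" "aleph0_saturated L N"
    and "finite V" and agree: "affine_agree L M N V e e'"
    and eq: "\<And>c d. affine_agree L M N (insert x V) (e(x := c)) (e'(x := d)) \<Longrightarrow>
               eval M (e(x := c)) \<phi> = eval N (e'(x := d)) \<phi>"
  shows "range (\<lambda>c. eval M (e(x := c)) \<phi>) = range (\<lambda>d. eval N (e'(x := d)) \<phi>)"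
proof (intro equalityI subsetI)
  fix r assume "r \<in> range (\<lambda>c. eval M (e(x := c)) \<phi>)"
  then obtain c where r: "r = eval M (e(x := c)) \<phi>"
    by blast
  obtain d where "affine_agree L M N (insert x V) (e(x := c)) (e'(x := d))"
    by (rule affine_agree_extend[OF assms(1,4,5) agree])
  then have "r = eval N (e'(x := d)) \<phi>"
    unfolding r by (rule eq)
  then show "r \<in> range (\<lambda>d. eval N (e'(x := d)) \<phi>)"
    by simp
next
  fix r assume "r \<in> range (\<lambda>d. eval N (e'(x := d)) \<phi>)"
  then obtain d where r: "r = eval N (e'(x := d)) \<phi>"
    by blast
  obtain c where "affine_agree L N M (insert x V) (e'(x := d)) (e(x := c))"
    by (rule affine_agree_extend[OF assms(2,3,5) affine_agree_sym[OF agree]])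
  then have "r = eval M (e(x := c)) \<phi>"
    unfolding r by (rule eq[OF affine_agree_sym, symmetric])
  then show "r \<in> range (\<lambda>c. eval M (e(x := c)) \<phi>)"
    by simp
qed

lemma affine_agree_eval_eq:
  fixes M :: "('a::complete_space, 'f, 'r) struc" and N :: "('b::complete_space, 'f, 'r) struc"
  assumes structs: "is_structure L M" "is_structure L N"
    and sat: "aleph0_saturated L M" "aleph0_saturated L N"
  shows "\<lbrakk>finite V; affine_agree L M N V e e'; wf_fml L \<phi>; fv \<phi> \<subseteq> V\<rbrakk> \<Longrightarrow>
    eval M e \<phi> = eval N e' \<phi>"
proof (induction \<phi> arbitrary: V e e')
  case (Dist s t)
  then have "Dist s t \<in> affine_fmls L V"
    by (simp add: affine_fmls_def)
  with Dist.prems(2) show ?case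
    unfolding affine_agree_def by blast
next
  case (Rel R ts)
  then have "Rel R ts \<in> affine_fmls L V"
    by (simp add: affine_fmls_def)
  with Rel.prems(2) show ?case
    unfolding affine_agree_def by blast
next
  case (Plus \<phi> \<psi>)
  have "eval M e \<phi> = eval N e' \<phi>"
    by (rule Plus.IH(1)) (use Plus.prems in auto)
  moreover have "eval M e \<psi> = eval N e' \<psi>"
    by (rule Plus.IH(2)) (use Plus.prems in auto)
  ultimately show ?case
    by simp
next
  case (Min \<phi> \<psi>)
  have "eval M e \<phi> = eval N e' \<phi>"
    by (rule Min.IH(1)) (use Min.prems in auto)
  moreover have "eval M e \<psi> = eval N e' \<psi>"
    by (rule Min.IH(2)) (use Min.prems in auto)
  ultimately show ?case
    by simp
next
  case (Max \<phi> \<psi>)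
  have "eval M e \<phi> = eval N e' \<phi>"
    by (rule Max.IH(1)) (use Max.prems in auto)
  moreover have "eval M e \<psi> = eval N e' \<psi>"
    by (rule Max.IH(2)) (use Max.prems in auto)
  ultimately show ?case
    by simp
next
  case (Scal r \<phi>)
  have "eval M e \<phi> = eval N e' \<phi>"
    by (rule Scal.IH) (use Scal.prems in auto)
  then show ?case
    by simp
next
  case (Sup x \<phi>)
  have "range (\<lambda>c. eval M (e(x := c)) \<phi>) = range (\<lambda>d. eval N (e'(x := d)) \<phi>)"
  proof (rule affine_agree_range_eq[OF structs sat Sup.prems(1,2)])
    fix c d assume "affine_agree L M N (insert x V) (e(x := c)) (e'(x := d))"
    then show "eval M (e(x := c)) \<phi> = eval N (e'(x := d)) \<phi>"
      by (rule Sup.IH[rotated 1]) (use Sup.prems in auto)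
  qed
  then show ?case
    by simp
next
  case (Inf x \<phi>)
  have "range (\<lambda>c. eval M (e(x := c)) \<phi>) = range (\<lambda>d. eval N (e'(x := d)) \<phi>)"
  proof (rule affine_agree_range_eq[OF structs sat Inf.prems(1,2)])
    fix c d assume "affine_agree L M N (insert x V) (e(x := c)) (e'(x := d))"
    then show "eval M (e(x := c)) \<phi> = eval N (e'(x := d)) \<phi>"
      by (rule Inf.IH[rotated 1]) (use Inf.prems in auto)
  qed
  then show ?case
    by simp
qed simp

theorem mainTheorem12:
  fixes L :: "('f, 'r) lang"
    and M :: "('a::complete_space, 'f, 'r) struc"
    and N :: "('b::complete_space, 'f, 'r) struc"
  assumes "is_structure L M" and "is_structure L N"
    and "affine_equiv L M N"
    and "aleph0_saturated L M" and "aleph0_saturated L N"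
  shows "CL_equiv L M N"
  unfolding CL_equiv_def
proof (intro allI impI)
  fix \<sigma> assume \<sigma>: "sentence L \<sigma>"
  have agree: "affine_agree L M N {} (\<lambda>_. undefined) (\<lambda>_. undefined)"
    using assms(3)
    unfolding affine_agree_def affine_fmls_def affine_equiv_def sentence_def sval_def by auto
  have "wf_fml L \<sigma>" "fv \<sigma> \<subseteq> {}"
    using \<sigma> by (simp_all add: sentence_def)
  then show "sval M \<sigma> = sval N \<sigma>"
    unfolding sval_def by (rule affine_agree_eval_eq[OF assms(1,2,4,5) finite.emptyI agree])
qed

end
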